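(* Let $n\ge 2$, $p\ge 1$, and let ${\bf x}=(x_1,\dots,x_n)\in\mathbb{R}^n$. Let $m$ be the median location, i.e. $m=x_{[k]}$ where $k=\lceil n/2\rceil$ (so $n=2k-1$ or $n=2k$) and $x_{[k]}$ denotes the $k$-th largest component of ${\bf x}$. Then $$\Big(\sum_{i=1}^n|m-x_i|^p\Big)^{1/p}\;\le\;2^{1-\frac1p}\,\min_{y\in\mathbb{R}}\Big(\sum_{i=1}^n|y-x_i|^p\Big)^{1/p}.$$
   Context: The social cost of locating a facility at $y\in\mathbb{R}$ for a location profile ${\bf x}=(x_1,\dots,x_n)$ is $sc({\bf x},y)=\big(\sum_{i=1}^n|x_i-y|^p\big)^{1/p}$. The median mechanism maps ${\bf x}$ to $m$ as defined in the claim. *)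

theory Defs
  imports "HOL-Analysis.Analysis"
begin

definition social_cost :: "nat \<Rightarrow> real \<Rightarrow> (nat \<Rightarrow> real) \<Rightarrow> real \<Rightarrow> real" where
  "social_cost n p x y = (\<Sum>i<n. \<bar>x i - y\<bar> powr p) powr (1 / p)"

definition kth_largest :: "nat \<Rightarrow> (nat \<Rightarrow> real) \<Rightarrow> nat \<Rightarrow> real" where
  "kth_largest n x k = rev (sort (map x [0..<n])) ! (k - 1)"

definition median_loc :: "nat \<Rightarrow> (nat \<Rightarrow> real) \<Rightarrow> real" where
  "median_loc n x = kth_largest n x (nat \<lceil>real n / 2\<rceil>)"

end

theory Submission
  imports Defs
begin

text \<open>For a point \<open>x\<^sub>i\<close> on the same side of the median \<open>m\<close> as \<open>y\<close>, the triangle inequality and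
  convexity of \<open>t\<^sup>p\<close> give \<open>|x\<^sub>i - m|\<^sup>p \<le> 2\<^sup>p\<^sup>-\<^sup>1 (|x\<^sub>i - y|\<^sup>p + |y - m|\<^sup>p)\<close>. For a point on the
  other side, \<open>|x\<^sub>i - y| = |x\<^sub>i - m| + |y - m|\<close> and superadditivity of \<open>t\<^sup>p\<close> give
  \<open>|x\<^sub>i - m|\<^sup>p \<le> 2\<^sup>p\<^sup>-\<^sup>1 (|x\<^sub>i - y|\<^sup>p - |y - m|\<^sup>p)\<close>. By the choice of \<open>m\<close>, at most half of the
  points lie strictly on the side of \<open>y\<close>, so the error terms \<open>\<plusminus>2\<^sup>p\<^sup>-\<^sup>1 |y - m|\<^sup>p\<close> sum to at
  most zero and \<open>\<Sum>|x\<^sub>i - m|\<^sup>p \<le> 2\<^sup>p\<^sup>-\<^sup>1 \<Sum>|x\<^sub>i - y|\<^sup>p\<close>; taking \<open>p\<close>-th roots gives the factor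
  \<open>2\<^sup>1\<^sup>-\<^sup>1\<^sup>/\<^sup>p\<close>.\<close>

lemma powr_add_le_two_powr:
  fixes a b p :: real
  assumes "a \<ge> 0" "b \<ge> 0" "p \<ge> 1"
  shows "(a + b) powr p \<le> 2 powr (p - 1) * (a powr p + b powr p)"
proof (cases "a > 0 \<and> b > 0")
  case True
  have midpoint: "((a + b) / 2) powr p \<le> (a powr p + b powr p) / 2"
    using convex_onD[OF powr_convex[OF assms(3)], of "1/2" a b] True
    by (simp add: field_simps)
  have "(a + b) powr p = (2 * ((a + b) / 2)) powr p"
    by (rule arg_cong[where f = "\<lambda>t. t powr p"]) simp
  also have "\<dots> = 2 powr p * ((a + b) / 2) powr p"
    by (rule powr_mult)
  also have "\<dots> \<le> 2 powr p * ((a powr p + b powr p) / 2)"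
    using midpoint by (intro mult_left_mono) auto
  finally show ?thesis by (simp add: powr_diff)
next
  case False
  then have "a = 0 \<or> b = 0" using assms by auto
  moreover have "1 \<le> (2::real) powr (p - 1)"
    using assms by (intro ge_one_powr_ge_zero) auto
  ultimately show ?thesis
    using assms by (auto simp: mult_le_cancel_right1)
qed

lemma powr_add_powr_le_powr_add:
  fixes a b p :: real
  assumes "a \<ge> 0" "b \<ge> 0" "p \<ge> 1"
  shows "a powr p + b powr p \<le> (a + b) powr p"
proof -
  have le: "t powr p \<le> t * (a + b) powr (p - 1)" if "0 \<le> t" "t \<le> a + b" for t
  proof (cases "t = 0")
    case False
    then have "t powr p = t * t powr (p - 1)" using that by (simp add: powr_diff)
    also have "\<dots> \<le> t * (a + b) powr (p - 1)"
      using that assms by (intro mult_left_mono powr_mono2) auto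
    finally show ?thesis .
  qed (use assms in simp)
  show ?thesis
  proof (cases "a + b = 0")
    case False
    then have "(a + b) powr p = (a + b) * (a + b) powr (p - 1)"
      using assms by (simp add: powr_diff)
    then show ?thesis using le[of a] le[of b] assms by (simp add: distrib_right)
  qed (use assms in \<open>simp add: add_nonneg_eq_0_iff\<close>)
qed

lemma powr_abs_diff_opposite_side:
  fixes a m y p :: real
  assumes "(a - m) * (y - m) \<le> 0" "p \<ge> 1"
  shows "\<bar>a - m\<bar> powr p + 2 powr (p - 1) * \<bar>y - m\<bar> powr p \<le> 2 powr (p - 1) * \<bar>a - y\<bar> powr p"
proof -
  define c :: real where "c = 2 powr (p - 1)"
  have c: "1 \<le> c" unfolding c_def using assms by (intro ge_one_powr_ge_zero) auto
  have "\<bar>a - y\<bar> = \<bar>a - m\<bar> + \<bar>y - m\<bar>"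
    using assms(1) by (cases "a \<le> m"; cases "y \<le> m") (auto simp: mult_le_0_iff)
  then have "\<bar>a - m\<bar> powr p + \<bar>y - m\<bar> powr p \<le> \<bar>a - y\<bar> powr p"
    using assms by (simp add: powr_add_powr_le_powr_add)
  then have "c * \<bar>a - m\<bar> powr p + c * \<bar>y - m\<bar> powr p \<le> c * \<bar>a - y\<bar> powr p"
    using c by (simp flip: distrib_left)
  moreover have "\<bar>a - m\<bar> powr p \<le> c * \<bar>a - m\<bar> powr p"
    using c by (simp add: mult_le_cancel_right1)
  ultimately show ?thesis unfolding c_def by linarith
qed

lemma sum_powr_abs_diff_le_if_balanced:
  fixes x :: "'a \<Rightarrow> real" and m y p :: real
  assumes "finite A" "p \<ge> 1"
    and balanced: "2 * card {i \<in> A. 0 < (x i - m) * (y - m)} \<le> card A"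
  shows "(\<Sum>i\<in>A. \<bar>x i - m\<bar> powr p) \<le> 2 powr (p - 1) * (\<Sum>i\<in>A. \<bar>x i - y\<bar> powr p)"
proof -
  define c :: real where "c = 2 powr (p - 1)"
  define D where "D = c * \<bar>y - m\<bar> powr p"
  define B where "B = {i \<in> A. 0 < (x i - m) * (y - m)}"
  have B: "B \<subseteq> A" "finite B" using assms(1) by (auto simp: B_def)
  have "(\<Sum>i\<in>B. \<bar>x i - m\<bar> powr p) \<le> (\<Sum>i\<in>B. c * \<bar>x i - y\<bar> powr p + D)"
  proof (rule sum_mono)
    fix i
    have "\<bar>x i - m\<bar> powr p \<le> (\<bar>x i - y\<bar> + \<bar>y - m\<bar>) powr p"
      using assms(2) by (intro powr_mono2) auto
    also have "\<dots> \<le> c * (\<bar>x i - y\<bar> powr p + \<bar>y - m\<bar> powr p)"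
      unfolding c_def using assms(2) by (intro powr_add_le_two_powr) auto
    finally show "\<bar>x i - m\<bar> powr p \<le> c * \<bar>x i - y\<bar> powr p + D"
      by (simp add: D_def distrib_left)
  qed
  moreover have "(\<Sum>i\<in>A - B. \<bar>x i - m\<bar> powr p) \<le> (\<Sum>i\<in>A - B. c * \<bar>x i - y\<bar> powr p - D)"
    using powr_abs_diff_opposite_side[OF _ assms(2)]
    by (intro sum_mono) (fastforce simp: B_def D_def c_def not_less)
  moreover have "real (card B) * D \<le> real (card (A - B)) * D"
    using balanced B D_def c_def by (intro mult_right_mono) (auto simp: card_Diff_subset B_def)
  ultimately have "(\<Sum>i\<in>A - B. \<bar>x i - m\<bar> powr p) + (\<Sum>i\<in>B. \<bar>x i - m\<bar> powr p)
      \<le> (\<Sum>i\<in>A - B. c * \<bar>x i - y\<bar> powr p) + (\<Sum>i\<in>B. c * \<bar>x i - y\<bar> powr p)"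
    by (simp add: sum.distrib sum_subtractf)
  then show ?thesis
    using B assms(1) by (simp add: sum.subset_diff[of B A] sum_distrib_left distrib_left c_def)
qed

lemma sorted_length_filter_less_nth:
  fixes xs :: "'a::linorder list"
  assumes "sorted xs" "j < length xs"
  shows "length (filter (\<lambda>v. v < xs ! j) xs) \<le> j"
proof -
  have "{i. i < length xs \<and> xs ! i < xs ! j} \<subseteq> {..<j}"
  proof safe
    fix i assume "i < length xs" "xs ! i < xs ! j"
    then show "i < j" using sorted_nth_mono[OF assms(1), of j i] by (meson leD leI)
  qed
  then have "card {i. i < length xs \<and> xs ! i < xs ! j} \<le> j"
    using card_mono[of "{..<j}"] by simp
  then show ?thesis by (simp add: length_filter_conv_card)
qed

lemma sorted_length_filter_greater_nth:
  fixes xs :: "'a::linorder list"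
  assumes "sorted xs" "j < length xs"
  shows "length (filter (\<lambda>v. xs ! j < v) xs) \<le> length xs - Suc j"
proof -
  have "{i. i < length xs \<and> xs ! j < xs ! i} \<subseteq> {j<..<length xs}"
  proof safe
    fix i assume "i < length xs" "xs ! j < xs ! i"
    then have "j < i" using sorted_nth_mono[OF assms(1), of i j] assms(2) by (meson leD leI)
    then show "i \<in> {j<..<length xs}" using \<open>i < length xs\<close> by simp
  qed
  then have "card {i. i < length xs \<and> xs ! j < xs ! i} \<le> length xs - Suc j"
    using card_mono[of "{j<..<length xs}"] by simp
  then show ?thesis by (simp add: length_filter_conv_card)
qed

lemma card_filter_eq_length_filter_sort:
  "card {i \<in> {..<n}. P (x i)} = length (filter P (sort (map x [0..<n])))"
proof -
  have "card {i \<in> {..<n}. P (x i)} = length (filter P (map x [0..<n]))"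
    by (simp add: length_filter_conv_card cong: conj_cong)
  also have "\<dots> = length (filter P (sort (map x [0..<n])))"
    by (metis mset_filter mset_sort size_mset)
  finally show ?thesis .
qed

lemma kth_largest_eq_sort_nth:
  assumes "1 \<le> k" "k \<le> n"
  shows "kth_largest n x k = sort (map x [0..<n]) ! (n - k)"
  using assms by (simp add: kth_largest_def rev_nth)

lemma card_less_kth_largest:
  assumes "1 \<le> k" "k \<le> n"
  shows "card {i \<in> {..<n}. x i < kth_largest n x k} \<le> n - k"
proof -
  have "card {i \<in> {..<n}. x i < kth_largest n x k}
      = length (filter (\<lambda>v. v < kth_largest n x k) (sort (map x [0..<n])))"
    by (rule card_filter_eq_length_filter_sort)
  also have "\<dots> \<le> n - k"
    using sorted_length_filter_less_nth[of "sort (map x [0..<n])" "n - k"] assms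
    by (simp add: kth_largest_eq_sort_nth)
  finally show ?thesis .
qed

lemma card_greater_kth_largest:
  assumes "1 \<le> k" "k \<le> n"
  shows "card {i \<in> {..<n}. kth_largest n x k < x i} \<le> k - 1"
proof -
  have "card {i \<in> {..<n}. kth_largest n x k < x i}
      = length (filter (\<lambda>v. kth_largest n x k < v) (sort (map x [0..<n])))"
    by (rule card_filter_eq_length_filter_sort)
  also have "\<dots> \<le> k - 1"
    using sorted_length_filter_greater_nth[of "sort (map x [0..<n])" "n - k"] assms
    by (simp add: kth_largest_eq_sort_nth)
  finally show ?thesis .
qed

lemma nat_ceiling_half: "nat \<lceil>real n / 2\<rceil> = (n + 1) div 2"
proof (cases "even n")
  case True
  then obtain k where "n = 2 * k" by blast
  then show ?thesis by simp
next
  case False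
  then obtain k where n: "n = 2 * k + 1" by (blast elim: oddE)
  have "\<lceil>real n / 2\<rceil> = int k + 1"
    unfolding n by (intro ceiling_unique) auto
  then show ?thesis using n by simp
qed

lemma median_loc_balanced:
  assumes "n \<ge> 1"
  shows "2 * card {i \<in> {..<n}. x i < median_loc n x} \<le> n"
    and "2 * card {i \<in> {..<n}. median_loc n x < x i} \<le> n"
proof -
  define k where "k = (n + 1) div 2"
  have median: "median_loc n x = kth_largest n x k"
    by (simp add: median_loc_def nat_ceiling_half k_def)
  have k: "1 \<le> k" "k \<le> n" using assms by (auto simp: k_def)
  show "2 * card {i \<in> {..<n}. x i < median_loc n x} \<le> n"
    using card_less_kth_largest[OF k, of x] by (simp add: median k_def)
  show "2 * card {i \<in> {..<n}. median_loc n x < x i} \<le> n"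
    using card_greater_kth_largest[OF k, of x] by (simp add: median k_def)
qed

lemma social_cost_median_loc_le:
  assumes "n \<ge> 1" "p \<ge> 1"
  shows "social_cost n p x (median_loc n x) \<le> 2 powr (1 - 1 / p) * social_cost n p x y"
proof -
  define m where "m = median_loc n x"
  have "2 * card {i \<in> {..<n}. 0 < (x i - m) * (y - m)} \<le> n"
  proof (cases y m rule: linorder_cases)
    case less
    then have "{i \<in> {..<n}. 0 < (x i - m) * (y - m)} = {i \<in> {..<n}. x i < m}"
      by (auto simp: zero_less_mult_iff)
    then show ?thesis using median_loc_balanced(1)[OF assms(1)] by (simp add: m_def)
  next
    case greater
    then have "{i \<in> {..<n}. 0 < (x i - m) * (y - m)} = {i \<in> {..<n}. m < x i}"
      by (auto simp: zero_less_mult_iff)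
    then show ?thesis using median_loc_balanced(2)[OF assms(1)] by (simp add: m_def)
  qed simp
  then have "(\<Sum>i<n. \<bar>x i - m\<bar> powr p) \<le> 2 powr (p - 1) * (\<Sum>i<n. \<bar>x i - y\<bar> powr p)"
    using assms(2) by (intro sum_powr_abs_diff_le_if_balanced) auto
  then have "social_cost n p x m \<le> (2 powr (p - 1) * (\<Sum>i<n. \<bar>x i - y\<bar> powr p)) powr (1 / p)"
    unfolding social_cost_def using assms(2) by (intro powr_mono2) (auto intro: sum_nonneg)
  also have "\<dots> = (2 powr (p - 1)) powr (1 / p) * social_cost n p x y"
    unfolding social_cost_def by (rule powr_mult)
  also have "(2 powr (p - 1)) powr (1 / p) = (2::real) powr (1 - 1 / p)"
    using assms(2) by (simp add: powr_powr field_simps)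
  finally show ?thesis by (simp add: m_def)
qed

theorem mainTheorem3:
  fixes n :: nat and p :: real and x :: "nat \<Rightarrow> real"
  assumes "n \<ge> 2" and "p \<ge> 1"
  shows "social_cost n p x (median_loc n x)
           \<le> 2 powr (1 - 1 / p) * (INF y. social_cost n p x y)"
proof -
  define c :: real where "c = 2 powr (1 - 1 / p)"
  have "c > 0" by (simp add: c_def)
  have "social_cost n p x (median_loc n x) / c \<le> (INF y. social_cost n p x y)"
    using social_cost_median_loc_le[of n p x] assms \<open>c > 0\<close>
    by (intro cINF_greatest) (auto simp: c_def field_simps)
  then show ?thesis
    using \<open>c > 0\<close> by (simp add: c_def field_simps)
qed

end
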